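(* The functor $\mathrm K\colon\mathbf{Set}\to\mathbf{Sgp}_{\mathbb C^\theta}$ defined by $\mathrm K(X)=((\mathrm L^+(X),\mu_X),\Delta_X)$ and $\mathrm K(f)=\mathrm L^+(f)$ is not an equivalence of categories.
   Context: For a set $X$, $\mathrm L^+(X)=\coprod_{n>0}X^n$ is the set of non-empty lists $[x_1,\dots,x_n]$; $\mathrm L^+(f)[x_1,\dots,x_n]=[f(x_1),\dots,f(x_n)]$. $\mu_X\colon\mathrm L^+(\mathrm L^+(X))\to\mathrm L^+(X)$ is concatenation, so $(\mathrm L^+(X),\mu_X)$ is the free semigroup on $X$ (product = concatenation). $\Delta_X[x_1,\dots,x_n]=[[x_1,\dots,x_n],[x_2,\dots,x_n],\dots,[x_n]]$ and $\varepsilon_X[x_1,\dots,x_n]=x_1$. $\mathbf{Sgp}$ is the category of semigroups. $\mathbb C^\theta$ is the comonad on $\mathbf{Sgp}$ sending a semigroup $(X,\cdot)$ to the set $\mathrm L^+(X)$ with the semigroup product $[x_1,\dots,x_n]\ast[y_1,\dots,y_m]=[x_1y_1,x_2y_1,\dots,x_ny_1,y_1,y_2,\dots,y_m]$, acting on morphisms by $\mathrm L^+$, with comultiplication $\Delta_X$ and counit $\varepsilon_X$. $\mathbf{Sgp}_{\mathbb C^\theta}$ is the category of $\mathbb C^\theta$-coalgebras: semigroups $Y$ with a semigroup morphism $\delta\colon Y\to\mathrm C^\theta(Y)$ satisfying $\Delta_Y\delta=\mathrm L^+(\delta)\delta$ and $\varepsilon_Y\delta=\mathrm{id}_Y$,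 with morphisms the semigroup morphisms commuting with the coactions. (For each set $X$, $\Delta_X$ is a semigroup morphism from $(\mathrm L^+(X),\mu_X)$ to $\mathrm C^\theta(\mathrm L^+(X),\mu_X)$, so $\mathrm K$ is well defined.) *)

theory Defs
  imports Main
begin

definition semigroup_on :: "'b set \<Rightarrow> ('b \<Rightarrow> 'b \<Rightarrow> 'b) \<Rightarrow> bool" where
  "semigroup_on Y m \<longleftrightarrow> (\<forall>x\<in>Y. \<forall>y\<in>Y. m x y \<in> Y) \<and>
     (\<forall>x\<in>Y. \<forall>y\<in>Y. \<forall>z\<in>Y. m (m x y) z = m x (m y z))"

definition Lp :: "'a set \<Rightarrow> 'a list set" where
  "Lp X = {xs. xs \<noteq> [] \<and> set xs \<subseteq> X}"

definition Delta :: "'a list \<Rightarrow> 'a list list" where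
  "Delta xs = map (\<lambda>i. drop i xs) [0..<length xs]"

definition theta_mult :: "('b \<Rightarrow> 'b \<Rightarrow> 'b) \<Rightarrow> 'b list \<Rightarrow> 'b list \<Rightarrow> 'b list" where
  "theta_mult m xs ys = map (\<lambda>x. m x (hd ys)) xs @ ys"

definition is_coalg :: "'b set \<Rightarrow> ('b \<Rightarrow> 'b \<Rightarrow> 'b) \<Rightarrow> ('b \<Rightarrow> 'b list) \<Rightarrow> bool" where
  "is_coalg Y m \<delta> \<longleftrightarrow> semigroup_on Y m \<and>
     (\<forall>y\<in>Y. \<delta> y \<in> Lp Y) \<and>
     (\<forall>x\<in>Y. \<forall>y\<in>Y. \<delta> (m x y) = theta_mult m (\<delta> x) (\<delta> y)) \<and>
     (\<forall>y\<in>Y. Delta (\<delta> y) = map \<delta> (\<delta> y)) \<and>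
     (\<forall>y\<in>Y. hd (\<delta> y) = y)"

definition coalg_hom ::
  "'b set \<Rightarrow> ('b \<Rightarrow> 'b \<Rightarrow> 'b) \<Rightarrow> ('b \<Rightarrow> 'b list) \<Rightarrow>
   'c set \<Rightarrow> ('c \<Rightarrow> 'c \<Rightarrow> 'c) \<Rightarrow> ('c \<Rightarrow> 'c list) \<Rightarrow> ('b \<Rightarrow> 'c) \<Rightarrow> bool" where
  "coalg_hom Y m \<delta> Y' m' \<delta>' h \<longleftrightarrow>
     (\<forall>y\<in>Y. h y \<in> Y') \<and>
     (\<forall>x\<in>Y. \<forall>y\<in>Y. h (m x y) = m' (h x) (h y)) \<and>
     (\<forall>y\<in>Y. \<delta>' (h y) = map h (\<delta> y))"

(* K(X) = ((L^+(X), concatenation), Delta_X), K(f) = L^+(f) = map f.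
   Objects of Set are sets X :: 'a set, coalgebras have carriers in 'b. *)

definition K_faithful :: "'a itself \<Rightarrow> bool" where
  "K_faithful (_ :: 'a itself) \<longleftrightarrow>
     (\<forall>(X::'a set) (X'::'a set) f g. f ` X \<subseteq> X' \<longrightarrow> g ` X \<subseteq> X' \<longrightarrow>
        (\<forall>xs\<in>Lp X. map f xs = map g xs) \<longrightarrow> (\<forall>x\<in>X. f x = g x))"

definition K_full :: "'a itself \<Rightarrow> bool" where
  "K_full (_ :: 'a itself) \<longleftrightarrow>
     (\<forall>(X::'a set) (X'::'a set) h.
        coalg_hom (Lp X) (@) Delta (Lp X') (@) Delta h \<longrightarrow>
        (\<exists>f. f ` X \<subseteq> X' \<and> (\<forall>xs\<in>Lp X. h xs = map f xs)))"

definition K_ess_surj :: "'a itself \<Rightarrow> 'b itself \<Rightarrow> bool" where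
  "K_ess_surj (_ :: 'a itself) (_ :: 'b itself) \<longleftrightarrow>
     (\<forall>(Y::'b set) m \<delta>. is_coalg Y m \<delta> \<longrightarrow>
        (\<exists>(X::'a set) (h::'a list \<Rightarrow> 'b) (k::'b \<Rightarrow> 'a list).
           coalg_hom (Lp X) (@) Delta Y m \<delta> h \<and>
           coalg_hom Y m \<delta> (Lp X) (@) Delta k \<and>
           (\<forall>xs\<in>Lp X. k (h xs) = xs) \<and> (\<forall>y\<in>Y. h (k y) = y)))"

definition K_equivalence :: "'a itself \<Rightarrow> 'b itself \<Rightarrow> bool" where
  "K_equivalence ta tb \<longleftrightarrow> K_faithful ta \<and> K_full ta \<and> K_ess_surj ta tb"

end

theory Submission
  imports Defs "HOL-Library.Countable"
begin

text \<open>The semigroup underlying \<open>K(X)\<close> is free, hence right cancellative, and so is every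
  coalgebra isomorphic to it. But for any set \<open>B\<close>, the semigroup \<open>\<nat>\<^sup>+ \<times> B\<close> with
  \<open>(n, b) (n', b') = (n + n', b')\<close> and coaction
  \<open>(n, b) \<mapsto> [(n, b), (n - 1, b), \<dots>, (1, b)]\<close> is a \<open>C\<^sup>\<theta>\<close>-coalgebra, and it is not
  right cancellative once \<open>B\<close> has two elements: \<open>(1, b) (1, c) = (1, c) (1, c)\<close>.
  An infinite type contains a copy of \<open>\<nat>\<^sup>+ \<times> bool\<close>.\<close>

definition right_cancellative_on :: "'b set \<Rightarrow> ('b \<Rightarrow> 'b \<Rightarrow> 'b) \<Rightarrow> bool" where
  "right_cancellative_on Y m \<longleftrightarrow> (\<forall>x\<in>Y. \<forall>x'\<in>Y. \<forall>y\<in>Y. m x y = m x' y \<longrightarrow> x = x')"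

lemma ess_surj_imp_right_cancellative:
  fixes Y :: "'b set"
  assumes "K_ess_surj TYPE('a) TYPE('b)" and "is_coalg Y m \<delta>"
  shows "right_cancellative_on Y m"
proof -
  obtain X :: "'a set" and h :: "'a list \<Rightarrow> 'b" and k where
    k_hom: "coalg_hom Y m \<delta> (Lp X) (@) Delta k" and h_k: "\<forall>y\<in>Y. h (k y) = y"
    using assms(1)[unfolded K_ess_surj_def, rule_format, OF assms(2)] by (elim exE conjE)
  have k_mult: "k (m x y) = k x @ k y" if "x \<in> Y" "y \<in> Y" for x y
    using k_hom that unfolding coalg_hom_def by blast
  show ?thesis
    unfolding right_cancellative_on_def
  proof (intro ballI impI)
    fix x x' y assume "x \<in> Y" "x' \<in> Y" "y \<in> Y" and "m x y = m x' y"
    then have "k x @ k y = k x' @ k y" by (metis k_mult)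
    then have "h (k x) = h (k x')" by simp
    with h_k \<open>x \<in> Y\<close> \<open>x' \<in> Y\<close> show "x = x'" by simp
  qed
qed

definition transfer_mult :: "('c \<Rightarrow> 'b) \<Rightarrow> 'c set \<Rightarrow> ('c \<Rightarrow> 'c \<Rightarrow> 'c) \<Rightarrow> 'b \<Rightarrow> 'b \<Rightarrow> 'b" where
  "transfer_mult e Y m x y = e (m (inv_into Y e x) (inv_into Y e y))"

definition transfer_coact :: "('c \<Rightarrow> 'b) \<Rightarrow> 'c set \<Rightarrow> ('c \<Rightarrow> 'c list) \<Rightarrow> 'b \<Rightarrow> 'b list" where
  "transfer_coact e Y \<delta> y = map e (\<delta> (inv_into Y e y))"

lemma transfer_mult_image:
  "inj_on e Y \<Longrightarrow> x \<in> Y \<Longrightarrow> y \<in> Y \<Longrightarrow> transfer_mult e Y m (e x) (e y) = e (m x y)"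
  by (simp add: transfer_mult_def)

lemma transfer_coact_image:
  "inj_on e Y \<Longrightarrow> y \<in> Y \<Longrightarrow> transfer_coact e Y \<delta> (e y) = map e (\<delta> y)"
  by (simp add: transfer_coact_def)

lemma Delta_map: "Delta (map f xs) = map (map f) (Delta xs)"
  by (simp add: Delta_def drop_map)

lemma coact_in_carrier:
  assumes "is_coalg Y m \<delta>" and "y \<in> Y"
  shows "set (\<delta> y) \<subseteq> Y" and "\<delta> y \<noteq> []"
  using assms unfolding is_coalg_def Lp_def by auto

lemma transfer_coact_mult:
  assumes coalg: "is_coalg Y m \<delta>" and inj: "inj_on e Y" and "a \<in> Y" "b \<in> Y"
  shows "transfer_coact e Y \<delta> (transfer_mult e Y m (e a) (e b))
    = theta_mult (transfer_mult e Y m) (transfer_coact e Y \<delta> (e a)) (transfer_coact e Y \<delta> (e b))"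
proof -
  have "m a b \<in> Y" "hd (\<delta> b) = b"
    using coalg assms(3,4) unfolding is_coalg_def semigroup_on_def by blast+
  then have "transfer_coact e Y \<delta> (transfer_mult e Y m (e a) (e b)) = map e (\<delta> (m a b))"
    using assms by (simp add: transfer_mult_image transfer_coact_image)
  also have "\<dots> = map e (theta_mult m (\<delta> a) (\<delta> b))"
    using coalg assms(3,4) unfolding is_coalg_def by simp
  also have "\<dots> = theta_mult (transfer_mult e Y m) (map e (\<delta> a)) (map e (\<delta> b))"
    using \<open>hd (\<delta> b) = b\<close> coact_in_carrier[OF coalg] assms(3,4)
    by (auto simp: theta_mult_def hd_map transfer_mult_image[OF inj] subset_iff)
  finally show ?thesis
    using assms by (simp add: transfer_coact_image)
qed

lemma is_coalg_transfer:
  assumes coalg: "is_coalg Y m \<delta>" and inj: "inj_on e Y"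
  shows "is_coalg (e ` Y) (transfer_mult e Y m) (transfer_coact e Y \<delta>)"
proof -
  note mult = transfer_mult_image[OF inj] and coact = transfer_coact_image[OF inj]
    and coact_set = coact_in_carrier(1)[OF coalg] and coact_ne = coact_in_carrier(2)[OF coalg]
  have "semigroup_on (e ` Y) (transfer_mult e Y m)"
    using coalg unfolding is_coalg_def semigroup_on_def by (auto simp: mult)
  moreover have "\<forall>y\<in>e ` Y. transfer_coact e Y \<delta> y \<in> Lp (e ` Y)"
    using coact_set coact_ne by (auto simp: coact Lp_def)
  moreover have "\<forall>x\<in>e ` Y. \<forall>y\<in>e ` Y. transfer_coact e Y \<delta> (transfer_mult e Y m x y)
      = theta_mult (transfer_mult e Y m) (transfer_coact e Y \<delta> x) (transfer_coact e Y \<delta> y)"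
    using transfer_coact_mult[OF coalg inj] by blast
  moreover have "\<forall>y\<in>e ` Y. Delta (transfer_coact e Y \<delta> y)
      = map (transfer_coact e Y \<delta>) (transfer_coact e Y \<delta> y)"
  proof
    fix y assume "y \<in> e ` Y"
    then obtain a where "a \<in> Y" "y = e a" by blast
    then have "Delta (map e (\<delta> a)) = map (transfer_coact e Y \<delta>) (map e (\<delta> a))"
      using coalg coact_set[OF \<open>a \<in> Y\<close>] unfolding is_coalg_def
      by (auto simp: Delta_map coact subset_iff intro!: map_cong)
    then show "Delta (transfer_coact e Y \<delta> y) = map (transfer_coact e Y \<delta>) (transfer_coact e Y \<delta> y)"
      using \<open>a \<in> Y\<close> by (simp add: \<open>y = e a\<close> coact)
  qed
  moreover have "\<forall>y\<in>e ` Y. hd (transfer_coact e Y \<delta> y) = y"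
    using coalg coact_ne unfolding is_coalg_def by (auto simp: coact hd_map)
  ultimately show ?thesis
    unfolding is_coalg_def by blast
qed

lemma right_cancellative_on_transfer:
  assumes "semigroup_on Y m" and "inj_on e Y"
    and "right_cancellative_on (e ` Y) (transfer_mult e Y m)"
  shows "right_cancellative_on Y m"
  using assms unfolding right_cancellative_on_def semigroup_on_def
  by (auto simp: transfer_mult_image inj_on_eq_iff)

definition rzero_mult :: "nat \<times> 'c \<Rightarrow> nat \<times> 'c \<Rightarrow> nat \<times> 'c" where
  "rzero_mult p q = (fst p + fst q, snd q)"

definition rzero_coact :: "nat \<times> 'c \<Rightarrow> (nat \<times> 'c) list" where
  "rzero_coact p = map (\<lambda>i. (fst p - i, snd p)) [0..<fst p]"

lemma length_rzero_coact [simp]: "length (rzero_coact p) = fst p"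
  by (simp add: rzero_coact_def)

lemma nth_rzero_coact [simp]: "i < fst p \<Longrightarrow> rzero_coact p ! i = (fst p - i, snd p)"
  by (simp add: rzero_coact_def)

lemma drop_rzero_coact: "drop i (rzero_coact p) = rzero_coact (fst p - i, snd p)"
  by (rule nth_equalityI) auto

lemma hd_rzero_coact: "0 < fst p \<Longrightarrow> hd (rzero_coact p) = p"
  by (simp add: rzero_coact_def upt_rec)

lemma Delta_rzero_coact: "Delta (rzero_coact p) = map rzero_coact (rzero_coact p)"
  by (rule nth_equalityI) (auto simp: Delta_def drop_rzero_coact)

lemma rzero_coact_mult:
  assumes "0 < fst q"
  shows "rzero_coact (rzero_mult p q) = theta_mult rzero_mult (rzero_coact p) (rzero_coact q)"
  by (rule nth_equalityI)
    (auto simp: theta_mult_def rzero_mult_def nth_append hd_rzero_coact[OF assms])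

lemma is_coalg_rzero: "is_coalg {p. 0 < fst p} rzero_mult rzero_coact"
proof -
  have "semigroup_on {p. 0 < fst p} (rzero_mult :: nat \<times> 'c \<Rightarrow> _)"
    by (simp add: semigroup_on_def rzero_mult_def)
  moreover have "rzero_coact p \<in> Lp {p. 0 < fst p}" if "0 < fst p" for p :: "nat \<times> 'c"
    using that by (auto simp: Lp_def in_set_conv_nth simp flip: length_greater_0_conv)
  ultimately show ?thesis
    unfolding is_coalg_def by (auto simp: rzero_coact_mult Delta_rzero_coact hd_rzero_coact)
qed

lemma not_right_cancellative_rzero: "\<not> right_cancellative_on {p :: nat \<times> bool. 0 < fst p} rzero_mult"
  unfolding right_cancellative_on_def
  by (auto simp: rzero_mult_def intro!: bexI[of _ "(1, False)"] bexI[of _ "(1, True)"])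

theorem corollary5p4:
  assumes "infinite (UNIV :: 'b set)"
  shows "\<not> K_equivalence TYPE('a) TYPE('b)"
proof
  assume "K_equivalence TYPE('a) TYPE('b)"
  then have ess_surj: "K_ess_surj TYPE('a) TYPE('b)"
    by (simp add: K_equivalence_def)
  obtain f :: "nat \<Rightarrow> 'b" where "inj f"
    using assms infinite_countable_subset by blast
  define e :: "nat \<times> bool \<Rightarrow> 'b" where "e = f \<circ> to_nat"
  define C :: "(nat \<times> bool) set" where "C = {p. 0 < fst p}"
  have inj: "inj_on e C"
    using \<open>inj f\<close> unfolding e_def by (meson inj_compose inj_to_nat inj_on_subset subset_UNIV)
  have coalg: "is_coalg C rzero_mult rzero_coact"
    unfolding C_def by (rule is_coalg_rzero)
  have "is_coalg (e ` C) (transfer_mult e C rzero_mult) (transfer_coact e C rzero_coact)"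
    using coalg inj by (rule is_coalg_transfer)
  then have "right_cancellative_on (e ` C) (transfer_mult e C rzero_mult)"
    by (rule ess_surj_imp_right_cancellative[OF ess_surj])
  then have "right_cancellative_on C rzero_mult"
    using coalg inj right_cancellative_on_transfer unfolding is_coalg_def by blast
  with not_right_cancellative_rzero show False
    by (simp add: C_def)
qed

end
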